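(* On the sphere $S^2=\{\underline r\in\mathbb{R}^3:\langle\underline r,\underline r\rangle=1\}$, for $\underline v\in\mathbb{R}^3$ define the vector fields $X[\underline v](\underline r)=\underline v-\underline r\,\langle \underline v,\underline r\rangle$ and $Y[\underline v](\underline r)=\underline v\times\underline r$, and let $X_i=X[\underline e_i]$, $Y_i=Y[\underline e_i]$ for the standard basis $\underline e_1,\underline e_2,\underline e_3$ of $\mathbb{R}^3$. Let $$\psi=\sum_{i,j=1}^3\Big(Y[\underline e_i\times\underline e_j]\otimes Y_j-X_j\otimes X[\underline e_i\times\underline e_j]\Big)\otimes Y_i\ \in\ \mathrm{diff}(S^2)\otimes_{\mathbb{R}}\mathrm{diff}(S^2)\otimes_{\mathbb{R}}\mathrm{diff}(S^2),$$ and let $\pi$ be the natural map from $\mathrm{diff}(S^2)^{\otimes_{\mathbb{R}}3}$ to the triple tensor product $\mathrm{diff}(S^2)\otimes_{C^\infty(S^2)}\mathrm{diff}(S^2)\otimes_{C^\infty(S^2)}\mathrm{diff}(S^2)$ of the module of vector fields over $C^\infty(S^2)$. Then $\pi\psi=0$.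
   Context: $\langle\ ,\ \rangle$ is the standard inner product and $\times$ the vector cross product on $\mathbb{R}^3$; $\mathrm{diff}(S^2)$ denotes the Lie algebra of smooth vector fields on $S^2$. *)

theory Defs
  imports "HOL-Analysis.Analysis"
begin

definition S2 :: "(real^3) set" where
  "S2 = {r. r \<bullet> r = 1}"

fun Ck :: "nat \<Rightarrow> (real^3) set \<Rightarrow> (real^3 \<Rightarrow> real) \<Rightarrow> bool" where
  "Ck 0 U f = continuous_on U f"
| "Ck (Suc k) U f = ((\<forall>x\<in>U. f differentiable (at x)) \<and>
      (\<forall>i::3. Ck k U (\<lambda>x. frechet_derivative f (at x) (axis i 1))))"

definition smooth_on_open :: "(real^3) set \<Rightarrow> (real^3 \<Rightarrow> real) \<Rightarrow> bool" where
  "smooth_on_open U f = (\<forall>k. Ck k U f)"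

text \<open>C^infinity(S^2): functions on S^2 extending to a smooth function on an open neighbourhood;
  represented canonically as functions on R^3 vanishing off S^2.\<close>
definition smooth_S2 :: "(real^3 \<Rightarrow> real) \<Rightarrow> bool" where
  "smooth_S2 f = ((\<exists>g U. open U \<and> S2 \<subseteq> U \<and> smooth_on_open U g \<and> (\<forall>r\<in>S2. f r = g r))
                  \<and> (\<forall>r. r \<notin> S2 \<longrightarrow> f r = 0))"

text \<open>diff(S^2): smooth tangent vector fields on S^2, as maps into R^3 vanishing off S^2.\<close>
definition vf_S2 :: "(real^3 \<Rightarrow> real^3) \<Rightarrow> bool" where
  "vf_S2 V = ((\<forall>i. smooth_S2 (\<lambda>r. V r $ i)) \<and> (\<forall>r\<in>S2. V r \<bullet> r = 0))"

type_synonym vfield = "real^3 \<Rightarrow> real^3"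

definition fmul :: "(real^3 \<Rightarrow> real) \<Rightarrow> vfield \<Rightarrow> vfield" where
  "fmul f V = (\<lambda>r. f r *\<^sub>R V r)"

definition vadd :: "vfield \<Rightarrow> vfield \<Rightarrow> vfield" where
  "vadd V W = (\<lambda>r. V r + W r)"

definition vscale :: "real \<Rightarrow> vfield \<Rightarrow> vfield" where
  "vscale c V = (\<lambda>r. c *\<^sub>R V r)"

text \<open>Formal real linear combinations of triples (free real vector space on diff^3).\<close>
type_synonym formal = "vfield \<times> vfield \<times> vfield \<Rightarrow> real"

definition delta :: "vfield \<times> vfield \<times> vfield \<Rightarrow> formal" where
  "delta t = (\<lambda>s. if s = t then 1 else 0)"

definition fadd :: "formal \<Rightarrow> formal \<Rightarrow> formal" where
  "fadd a b = (\<lambda>s. a s + b s)"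

definition fsub :: "formal \<Rightarrow> formal \<Rightarrow> formal" where
  "fsub a b = (\<lambda>s. a s - b s)"

definition fscale :: "real \<Rightarrow> formal \<Rightarrow> formal" where
  "fscale c a = (\<lambda>s. c * a s)"

text \<open>Defining relations of diff \<otimes>_{C^inf(S^2)} diff \<otimes>_{C^inf(S^2)} diff:
  real multilinearity in each slot and C^inf(S^2)-balancing between slots.\<close>
inductive_set tensor_rels :: "formal set" where
  add1: "\<lbrakk>vf_S2 X; vf_S2 X'; vf_S2 Y; vf_S2 Z\<rbrakk> \<Longrightarrow>
     fsub (delta (vadd X X', Y, Z)) (fadd (delta (X, Y, Z)) (delta (X', Y, Z))) \<in> tensor_rels"
| add2: "\<lbrakk>vf_S2 X; vf_S2 Y; vf_S2 Y'; vf_S2 Z\<rbrakk> \<Longrightarrow>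
     fsub (delta (X, vadd Y Y', Z)) (fadd (delta (X, Y, Z)) (delta (X, Y', Z))) \<in> tensor_rels"
| add3: "\<lbrakk>vf_S2 X; vf_S2 Y; vf_S2 Z; vf_S2 Z'\<rbrakk> \<Longrightarrow>
     fsub (delta (X, Y, vadd Z Z')) (fadd (delta (X, Y, Z)) (delta (X, Y, Z'))) \<in> tensor_rels"
| scal1: "\<lbrakk>vf_S2 X; vf_S2 Y; vf_S2 Z\<rbrakk> \<Longrightarrow>
     fsub (delta (vscale c X, Y, Z)) (fscale c (delta (X, Y, Z))) \<in> tensor_rels"
| scal2: "\<lbrakk>vf_S2 X; vf_S2 Y; vf_S2 Z\<rbrakk> \<Longrightarrow>
     fsub (delta (X, vscale c Y, Z)) (fscale c (delta (X, Y, Z))) \<in> tensor_rels"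
| scal3: "\<lbrakk>vf_S2 X; vf_S2 Y; vf_S2 Z\<rbrakk> \<Longrightarrow>
     fsub (delta (X, Y, vscale c Z)) (fscale c (delta (X, Y, Z))) \<in> tensor_rels"
| bal12: "\<lbrakk>smooth_S2 f; vf_S2 X; vf_S2 Y; vf_S2 Z\<rbrakk> \<Longrightarrow>
     fsub (delta (fmul f X, Y, Z)) (delta (X, fmul f Y, Z)) \<in> tensor_rels"
| bal23: "\<lbrakk>smooth_S2 f; vf_S2 X; vf_S2 Y; vf_S2 Z\<rbrakk> \<Longrightarrow>
     fsub (delta (X, fmul f Y, Z)) (delta (X, Y, fmul f Z)) \<in> tensor_rels"

text \<open>Real span of the relations = kernel of the quotient map from the free real vector
  space on diff^3 onto diff \<otimes>_{C^inf} diff \<otimes>_{C^inf} diff.\<close>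
inductive_set rel_span :: "formal set" where
  zero: "(\<lambda>_. 0) \<in> rel_span"
| rel: "a \<in> tensor_rels \<Longrightarrow> a \<in> rel_span"
| add: "\<lbrakk>a \<in> rel_span; b \<in> rel_span\<rbrakk> \<Longrightarrow> fadd a b \<in> rel_span"
| scale: "a \<in> rel_span \<Longrightarrow> fscale c a \<in> rel_span"

definition Xf :: "real^3 \<Rightarrow> vfield" where
  "Xf v = (\<lambda>r. if r \<in> S2 then v - (v \<bullet> r) *\<^sub>R r else 0)"

definition Yf :: "real^3 \<Rightarrow> vfield" where
  "Yf v = (\<lambda>r. if r \<in> S2 then cross3 v r else 0)"

abbreviation e :: "3 \<Rightarrow> real^3" where
  "e i \<equiv> axis i 1"

text \<open>A representative of psi in the free real vector space on diff^3
  (any representative of the element of diff^{\<otimes>_R 3} works, since the real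
  multilinearity relations are in rel_span).\<close>
definition psi :: formal where
  "psi = (\<lambda>s. \<Sum>i\<in>(UNIV::3 set). \<Sum>j\<in>(UNIV::3 set).
      delta (Yf (cross3 (e i) (e j)), Yf (e j), Yf (e i)) s - delta (Xf (e j), Xf (cross3 (e i) (e j)), Yf (e i)) s)"

end

theory Submission
  imports Defs
begin

text \<open>Write X_a = X[e_a]. At a point r of the sphere, X_a(r) is the orthogonal projection of e_a
  onto the tangent plane, so every tangent field q equals \<Sum>_a q_a X_a with q_a the ambient
  components of q. The balancing relations move these coefficients into the last factor, turning
  an elementary tensor q1 \<otimes> q2 \<otimes> q3 into \<Sum>_{a,b} X_a \<otimes> X_b \<otimes> (q1_a q2_b q3). Hence a combination
  of elementary tensors maps to zero as soon as its coefficient fields W_ab vanish on the sphere;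
  for \<psi> this is a pointwise identity between cross products at unit vectors r. All fields
  involved are restrictions of polynomial maps, which are smooth on the open set \<real>^3.\<close>

lemma real_polynomial_function_has_derivative:
  fixes p :: "'a::real_normed_vector \<Rightarrow> real"
  assumes "real_polynomial_function p"
  obtains D where "\<And>x. (p has_derivative D x) (at x)" "\<And>v. real_polynomial_function (\<lambda>x. D x v)"
  using assms
proof (induction arbitrary: thesis)
  case (linear f)
  show ?case
    by (rule linear.prems[of "\<lambda>x. f"]) (auto intro: bounded_linear_imp_has_derivative linear.hyps)
next
  case (const c)
  show ?case by (rule const.prems[of "\<lambda>x h. 0"]) auto
next
  case (add f g)
  obtain Df Dg where Df: "\<And>x. (f has_derivative Df x) (at x)" "\<And>v. real_polynomial_function (\<lambda>x. Df x v)"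
    and Dg: "\<And>x. (g has_derivative Dg x) (at x)" "\<And>v. real_polynomial_function (\<lambda>x. Dg x v)"
    using add.IH by metis
  show ?case
    by (rule add.prems[of "\<lambda>x h. Df x h + Dg x h"]) (auto intro: has_derivative_add Df Dg)
next
  case (mult f g)
  obtain Df Dg where Df: "\<And>x. (f has_derivative Df x) (at x)" "\<And>v. real_polynomial_function (\<lambda>x. Df x v)"
    and Dg: "\<And>x. (g has_derivative Dg x) (at x)" "\<And>v. real_polynomial_function (\<lambda>x. Dg x v)"
    using mult.IH by metis
  have poly: "real_polynomial_function (\<lambda>x. f x * Dg x v + Df x v * g x)" for v
    using mult.hyps Df(2) Dg(2) by (intro real_polynomial_function.intros(3,4))
  show ?case
    by (rule mult.prems[of "\<lambda>x h. f x * Dg x h + Df x h * g x"])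
       (auto intro: has_derivative_mult Df Dg poly)
qed

lemma real_polynomial_function_Ck:
  "real_polynomial_function p \<Longrightarrow> Ck k UNIV p"
proof (induction k arbitrary: p)
  case 0
  then show ?case
    by (simp add: continuous_on_polymonial_function real_polynomial_function_eq)
next
  case (Suc k)
  obtain D where D: "\<And>x. (p has_derivative D x) (at x)" "\<And>v. real_polynomial_function (\<lambda>x. D x v)"
    using real_polynomial_function_has_derivative[OF Suc.prems] by blast
  then have "(\<lambda>x. frechet_derivative p (at x) v) = (\<lambda>x. D x v)" for v
    using frechet_derivative_at[OF D(1)] by metis
  with D Suc.IH show ?case by (auto simp: differentiable_def)
qed

lemma smooth_S2_restrict_polynomial:
  "real_polynomial_function p \<Longrightarrow> smooth_S2 (\<lambda>r. if r \<in> S2 then p r else 0)"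
  unfolding smooth_S2_def smooth_on_open_def
  by (auto intro!: exI[of _ p] exI[of _ UNIV] real_polynomial_function_Ck)

lemma real_polynomial_function_vec_component:
  fixes q :: "'a::real_normed_vector \<Rightarrow> real^'n"
  assumes "polynomial_function q"
  shows "real_polynomial_function (\<lambda>x. q x $ i)"
  using polynomial_function_inner[OF assms, of "axis i 1"]
  by (simp add: inner_axis real_polynomial_function_eq)

definition on_S2 :: "vfield \<Rightarrow> vfield" where
  "on_S2 q = (\<lambda>r. if r \<in> S2 then q r else 0)"

definition tangent_polynomial_field :: "vfield \<Rightarrow> bool" where
  "tangent_polynomial_field q \<longleftrightarrow> polynomial_function q \<and> (\<forall>r\<in>S2. q r \<bullet> r = 0)"

lemma vf_S2_on_S2:
  assumes "tangent_polynomial_field q"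
  shows "vf_S2 (on_S2 q)"
proof -
  have "(\<lambda>r. on_S2 q r $ i) = (\<lambda>r. if r \<in> S2 then q r $ i else 0)" for i
    by (simp add: on_S2_def fun_eq_iff)
  then have "smooth_S2 (\<lambda>r. on_S2 q r $ i)" for i
    using smooth_S2_restrict_polynomial[OF real_polynomial_function_vec_component, of q i] assms
    by (simp add: tangent_polynomial_field_def)
  then show ?thesis
    using assms by (simp add: vf_S2_def on_S2_def tangent_polynomial_field_def)
qed

lemma tangent_polynomial_field_zero: "tangent_polynomial_field (\<lambda>r. 0)"
  by (simp add: tangent_polynomial_field_def)

lemma tangent_polynomial_field_diff:
  "tangent_polynomial_field p \<Longrightarrow> tangent_polynomial_field q \<Longrightarrow> tangent_polynomial_field (\<lambda>r. p r - q r)"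
  by (auto simp: tangent_polynomial_field_def inner_diff_left)

lemma tangent_polynomial_field_scaleR:
  "real_polynomial_function f \<Longrightarrow> tangent_polynomial_field q \<Longrightarrow> tangent_polynomial_field (\<lambda>r. f r *\<^sub>R q r)"
  by (auto simp: tangent_polynomial_field_def real_polynomial_function_eq)

lemma tangent_polynomial_field_sum:
  "finite A \<Longrightarrow> (\<And>a. a \<in> A \<Longrightarrow> tangent_polynomial_field (w a)) \<Longrightarrow>
    tangent_polynomial_field (\<lambda>r. \<Sum>a\<in>A. w a r)"
  by (auto simp: tangent_polynomial_field_def inner_sum_left)

lemma on_S2_zero: "on_S2 (\<lambda>r. 0) = (\<lambda>r. 0)"
  by (simp add: on_S2_def)

lemma on_S2_add: "on_S2 (\<lambda>r. p r + q r) = vadd (on_S2 p) (on_S2 q)"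
  by (auto simp: on_S2_def vadd_def)

lemma on_S2_scaleR: "on_S2 (\<lambda>r. c *\<^sub>R q r) = vscale c (on_S2 q)"
  by (auto simp: on_S2_def vscale_def)

lemma fmul_on_S2: "fmul (\<lambda>r. if r \<in> S2 then f r else 0) (on_S2 q) = on_S2 (\<lambda>r. f r *\<^sub>R q r)"
  by (auto simp: fmul_def on_S2_def)

lemma on_S2_cong: "(\<And>r. r \<in> S2 \<Longrightarrow> p r = q r) \<Longrightarrow> on_S2 p = on_S2 q"
  by (auto simp: on_S2_def)

definition tangent_proj :: "real^3 \<Rightarrow> real^3 \<Rightarrow> real^3" where
  "tangent_proj v r = v - (v \<bullet> r) *\<^sub>R r"

lemma Xf_eq_on_S2: "Xf v = on_S2 (tangent_proj v)"
  unfolding Xf_def on_S2_def tangent_proj_def ..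

lemma Yf_eq_on_S2: "Yf v = on_S2 (cross3 v)"
  by (simp add: Yf_def on_S2_def)

lemma tangent_polynomial_field_tangent_proj: "tangent_polynomial_field (tangent_proj v)"
proof -
  have "real_polynomial_function (\<lambda>r. v \<bullet> r)"
    by (simp add: bounded_linear_inner_right polynomial_function_bounded_linear real_polynomial_function_eq)
  then show ?thesis
    unfolding tangent_polynomial_field_def tangent_proj_def
    by (auto simp: S2_def inner_diff_left real_polynomial_function_eq)
qed

lemma tangent_polynomial_field_cross3: "tangent_polynomial_field (cross3 v)"
proof -
  have "bounded_linear (cross3 v)"
    using bilinear_cross bilinear_conv_bounded_bilinear bounded_bilinear.bounded_linear_right by blast
  then show ?thesis
    by (simp add: tangent_polynomial_field_def dot_cross_self polynomial_function_bounded_linear)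
qed

lemma vf_S2_Xf: "vf_S2 (Xf v)"
  by (simp add: Xf_eq_on_S2 vf_S2_on_S2 tangent_polynomial_field_tangent_proj)

lemma sum_tangent_proj_axis: "(\<Sum>a\<in>UNIV. x $ a *\<^sub>R tangent_proj (e a) r) = tangent_proj x r"
proof -
  have "(\<Sum>a\<in>UNIV. x $ a *\<^sub>R e a) = x"
    using basis_expansion[of x] by (simp add: scalar_mult_eq_scaleR)
  moreover have "(\<Sum>a\<in>UNIV. x $ a * (e a \<bullet> r)) = x \<bullet> r"
    by (simp add: inner_axis' inner_vec_def[of x r])
  ultimately show ?thesis
    by (simp add: tangent_proj_def scaleR_diff_right sum_subtractf scaleR_sum_left[symmetric])
qed

definition fsum :: "'a set \<Rightarrow> ('a \<Rightarrow> formal) \<Rightarrow> formal" where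
  "fsum A f = (\<lambda>s. \<Sum>x\<in>A. f x s)"

lemma fsum_insert: "finite A \<Longrightarrow> x \<notin> A \<Longrightarrow> fsum (insert x A) f = fadd (f x) (fsum A f)"
  by (simp add: fsum_def fadd_def)

lemma fsub_fsum: "fsub (fsum A f) (fsum A g) = fsum A (\<lambda>x. fsub (f x) (g x))"
  by (simp add: fsum_def fsub_def sum_subtractf)

lemma fsum_swap: "fsum A (\<lambda>x. fsum B (\<lambda>y. f x y)) = fsum B (\<lambda>y. fsum A (\<lambda>x. f x y))"
  unfolding fsum_def by (rule ext) (rule sum.swap)

lemma rel_span_fsub: "a \<in> rel_span \<Longrightarrow> b \<in> rel_span \<Longrightarrow> fsub a b \<in> rel_span"
  using rel_span.add[OF _ rel_span.scale[of b "-1"], of a] by (simp add: fadd_def fscale_def fsub_def)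

lemma rel_span_fsum: "finite A \<Longrightarrow> (\<And>x. x \<in> A \<Longrightarrow> f x \<in> rel_span) \<Longrightarrow> fsum A f \<in> rel_span"
proof (induction A rule: finite_induct)
  case empty
  then show ?case using rel_span.zero by (simp add: fsum_def)
next
  case (insert x A)
  then show ?case by (simp add: fsum_insert rel_span.add)
qed

definition rel_equiv :: "formal \<Rightarrow> formal \<Rightarrow> bool" (infix "\<cong>" 50) where
  "a \<cong> b \<longleftrightarrow> fsub a b \<in> rel_span"

lemma rel_equiv_refl [simp]: "a \<cong> a"
  using rel_span.zero by (simp add: rel_equiv_def fsub_def)

lemma rel_equiv_sym: "a \<cong> b \<Longrightarrow> b \<cong> a"
  using rel_span.scale[of "fsub a b" "-1"] by (simp add: rel_equiv_def fsub_def fscale_def)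

lemma rel_equiv_trans [trans]: "a \<cong> b \<Longrightarrow> b \<cong> c \<Longrightarrow> a \<cong> c"
  using rel_span.add[of "fsub a b" "fsub b c"] by (simp add: rel_equiv_def fsub_def fadd_def)

lemma rel_equiv_fadd: "a \<cong> a' \<Longrightarrow> b \<cong> b' \<Longrightarrow> fadd a b \<cong> fadd a' b'"
  using rel_span.add[of "fsub a a'" "fsub b b'"]
  by (simp add: rel_equiv_def fsub_def fadd_def algebra_simps)

lemma rel_equiv_fsub: "a \<cong> a' \<Longrightarrow> b \<cong> b' \<Longrightarrow> fsub a b \<cong> fsub a' b'"
  using rel_span_fsub[of "fsub a a'" "fsub b b'"]
  by (simp add: rel_equiv_def fsub_def algebra_simps)

lemma rel_equiv_fsum: "finite A \<Longrightarrow> (\<And>x. x \<in> A \<Longrightarrow> f x \<cong> g x) \<Longrightarrow> fsum A f \<cong> fsum A g"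
  by (simp add: rel_equiv_def fsub_fsum rel_span_fsum)

lemma rel_span_rel_equiv: "a \<cong> b \<Longrightarrow> b \<in> rel_span \<Longrightarrow> a \<in> rel_span"
  using rel_span.add[of "fsub a b" b] by (simp add: rel_equiv_def fsub_def fadd_def)

definition linear_mod_rels :: "(vfield \<Rightarrow> formal) \<Rightarrow> bool" where
  "linear_mod_rels T \<longleftrightarrow>
     (\<forall>X Y. vf_S2 X \<longrightarrow> vf_S2 Y \<longrightarrow> T (vadd X Y) \<cong> fadd (T X) (T Y)) \<and>
     (\<forall>c X. vf_S2 X \<longrightarrow> T (vscale c X) \<cong> fscale c (T X))"

lemma linear_mod_rels_slot1: "vf_S2 Y \<Longrightarrow> vf_S2 Z \<Longrightarrow> linear_mod_rels (\<lambda>X. delta (X, Y, Z))"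
  by (simp add: linear_mod_rels_def rel_equiv_def rel_span.rel tensor_rels.add1 tensor_rels.scal1)

lemma linear_mod_rels_slot2: "vf_S2 X \<Longrightarrow> vf_S2 Z \<Longrightarrow> linear_mod_rels (\<lambda>Y. delta (X, Y, Z))"
  by (simp add: linear_mod_rels_def rel_equiv_def rel_span.rel tensor_rels.add2 tensor_rels.scal2)

lemma linear_mod_rels_slot3: "vf_S2 X \<Longrightarrow> vf_S2 Y \<Longrightarrow> linear_mod_rels (\<lambda>Z. delta (X, Y, Z))"
  by (simp add: linear_mod_rels_def rel_equiv_def rel_span.rel tensor_rels.add3 tensor_rels.scal3)

lemma vf_S2_zero: "vf_S2 (\<lambda>r. 0)"
  using vf_S2_on_S2[OF tangent_polynomial_field_zero] by (simp add: on_S2_zero)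

lemma linear_mod_rels_zero:
  assumes "linear_mod_rels T"
  shows "T (\<lambda>r. 0) \<in> rel_span"
proof -
  have "T (vscale 0 (\<lambda>r. 0)) \<cong> fscale 0 (T (\<lambda>r. 0))"
    using assms vf_S2_zero by (simp add: linear_mod_rels_def)
  then show ?thesis
    using rel_span.zero by (simp add: vscale_def fscale_def rel_equiv_def fsub_def)
qed

lemma linear_mod_rels_on_S2_diff:
  assumes T: "linear_mod_rels T"
    and p: "tangent_polynomial_field p" and q: "tangent_polynomial_field q"
  shows "T (on_S2 (\<lambda>r. p r - q r)) \<cong> fsub (T (on_S2 p)) (T (on_S2 q))"
proof -
  have split: "on_S2 (\<lambda>r. p r - q r) = vadd (on_S2 p) (vscale (-1) (on_S2 q))"
    by (simp flip: on_S2_add on_S2_scaleR)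
  have "tangent_polynomial_field (\<lambda>r. (-1) *\<^sub>R q r)"
    by (intro tangent_polynomial_field_scaleR real_polynomial_function.intros(2) q)
  from vf_S2_on_S2[OF this]
  have vf: "vf_S2 (on_S2 p)" "vf_S2 (on_S2 q)" "vf_S2 (vscale (-1) (on_S2 q))"
    using p q by (simp_all only: on_S2_scaleR vf_S2_on_S2)
  have "T (vadd (on_S2 p) (vscale (-1) (on_S2 q)))
      \<cong> fadd (T (on_S2 p)) (T (vscale (-1) (on_S2 q)))"
    using T vf by (simp add: linear_mod_rels_def)
  also have "\<dots> \<cong> fadd (T (on_S2 p)) (fscale (-1) (T (on_S2 q)))"
    using T vf by (simp add: linear_mod_rels_def rel_equiv_fadd)
  finally show ?thesis
    unfolding split by (simp add: fadd_def fscale_def fsub_def)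
qed

lemma linear_mod_rels_on_S2_sum:
  assumes T: "linear_mod_rels T"
  shows "finite A \<Longrightarrow> (\<And>a. a \<in> A \<Longrightarrow> tangent_polynomial_field (w a)) \<Longrightarrow>
    T (on_S2 (\<lambda>r. \<Sum>a\<in>A. w a r)) \<cong> fsum A (\<lambda>a. T (on_S2 (w a)))"
proof (induction A rule: finite_induct)
  case empty
  then show ?case
    using linear_mod_rels_zero[OF T] by (simp add: on_S2_zero fsum_def rel_equiv_def fsub_def)
next
  case (insert x A)
  have split: "on_S2 (\<lambda>r. \<Sum>a\<in>insert x A. w a r) = vadd (on_S2 (w x)) (on_S2 (\<lambda>r. \<Sum>a\<in>A. w a r))"
    using insert.hyps by (simp flip: on_S2_add)
  have "T (vadd (on_S2 (w x)) (on_S2 (\<lambda>r. \<Sum>a\<in>A. w a r)))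
      \<cong> fadd (T (on_S2 (w x))) (T (on_S2 (\<lambda>r. \<Sum>a\<in>A. w a r)))"
    using T insert.prems unfolding linear_mod_rels_def
    by (simp add: vf_S2_on_S2 tangent_polynomial_field_sum insert.hyps)
  also have "\<dots> \<cong> fadd (T (on_S2 (w x))) (fsum A (\<lambda>a. T (on_S2 (w a))))"
    using insert by (simp add: rel_equiv_fadd)
  finally show ?case
    by (simp only: split fsum_insert[OF insert.hyps])
qed

lemma delta_balance12:
  assumes "real_polynomial_function f" "tangent_polynomial_field u" "tangent_polynomial_field y" "vf_S2 Z"
  shows "delta (on_S2 (\<lambda>r. f r *\<^sub>R u r), on_S2 y, Z) \<cong> delta (on_S2 u, on_S2 (\<lambda>r. f r *\<^sub>R y r), Z)"
  using tensor_rels.bal12[OF smooth_S2_restrict_polynomial vf_S2_on_S2 vf_S2_on_S2, OF assms]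
  by (simp add: rel_equiv_def rel_span.rel fmul_on_S2)

lemma delta_balance23:
  assumes "real_polynomial_function f" "vf_S2 X" "tangent_polynomial_field y" "tangent_polynomial_field z"
  shows "delta (X, on_S2 (\<lambda>r. f r *\<^sub>R y r), on_S2 z) \<cong> delta (X, on_S2 y, on_S2 (\<lambda>r. f r *\<^sub>R z r))"
  using tensor_rels.bal23[OF smooth_S2_restrict_polynomial _ vf_S2_on_S2 vf_S2_on_S2, OF assms]
  by (simp add: rel_equiv_def rel_span.rel fmul_on_S2)

definition frame_tensor :: "(3 \<Rightarrow> 3 \<Rightarrow> vfield) \<Rightarrow> formal" where
  "frame_tensor W = fsum UNIV (\<lambda>a. fsum UNIV (\<lambda>b. delta (Xf (e a), Xf (e b), on_S2 (W a b))))"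

lemma on_S2_frame_expansion:
  assumes "tangent_polynomial_field q"
  shows "on_S2 q = on_S2 (\<lambda>r. \<Sum>a\<in>UNIV. q r $ a *\<^sub>R tangent_proj (e a) r)"
proof (rule on_S2_cong)
  fix r
  assume "r \<in> S2"
  then have "tangent_proj (q r) r = q r"
    using assms by (simp add: tangent_proj_def tangent_polynomial_field_def)
  then show "q r = (\<Sum>a\<in>UNIV. q r $ a *\<^sub>R tangent_proj (e a) r)"
    by (simp add: sum_tangent_proj_axis)
qed

lemma tangent_polynomial_field_component_scaleR:
  assumes "tangent_polynomial_field p" "tangent_polynomial_field q"
  shows "tangent_polynomial_field (\<lambda>r. p r $ a *\<^sub>R q r)"
  using assms
  by (intro tangent_polynomial_field_scaleR real_polynomial_function_vec_component)
     (simp_all add: tangent_polynomial_field_def)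

lemma tangent_polynomial_field_coefficient_scaleR:
  assumes "tangent_polynomial_field p" "tangent_polynomial_field q" "tangent_polynomial_field z"
  shows "tangent_polynomial_field (\<lambda>r. (p r $ a * q r $ b) *\<^sub>R z r)"
  using assms
  by (intro tangent_polynomial_field_scaleR real_polynomial_function.intros(4)
        real_polynomial_function_vec_component)
     (simp_all add: tangent_polynomial_field_def)

lemma delta_frame_expansion:
  assumes q1: "tangent_polynomial_field q1" and q2: "tangent_polynomial_field q2"
    and q3: "tangent_polynomial_field q3"
  shows "delta (on_S2 q1, on_S2 q2, on_S2 q3) \<cong> frame_tensor (\<lambda>a b r. (q1 r $ a * q2 r $ b) *\<^sub>R q3 r)"
proof -
  let ?X = "\<lambda>a. tangent_proj (e a)"
  note tpf = tangent_polynomial_field_tangent_proj q1 q2 q3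
  have poly: "real_polynomial_function (\<lambda>r. q1 r $ a)" "real_polynomial_function (\<lambda>r. q2 r $ a)" for a
    using q1 q2 by (simp_all add: tangent_polynomial_field_def real_polynomial_function_vec_component)
  have "delta (on_S2 q1, on_S2 q2, on_S2 q3)
      \<cong> fsum UNIV (\<lambda>a. delta (on_S2 (\<lambda>r. q1 r $ a *\<^sub>R ?X a r), on_S2 q2, on_S2 q3))"
    by (subst on_S2_frame_expansion[OF q1], intro linear_mod_rels_on_S2_sum linear_mod_rels_slot1)
       (simp_all add: vf_S2_on_S2 tangent_polynomial_field_component_scaleR tpf)
  also have "\<dots> \<cong> fsum UNIV (\<lambda>a. fsum UNIV (\<lambda>b.
      delta (on_S2 (?X a), on_S2 (?X b), on_S2 (\<lambda>r. (q1 r $ a * q2 r $ b) *\<^sub>R q3 r))))"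
  proof (rule rel_equiv_fsum[OF finite])
    fix a :: 3
    have "delta (on_S2 (\<lambda>r. q1 r $ a *\<^sub>R ?X a r), on_S2 q2, on_S2 q3)
        \<cong> delta (on_S2 (?X a), on_S2 (\<lambda>r. q1 r $ a *\<^sub>R q2 r), on_S2 q3)"
      by (rule delta_balance12) (simp_all add: vf_S2_on_S2 tpf poly)
    also have "\<dots> \<cong> delta (on_S2 (?X a), on_S2 q2, on_S2 (\<lambda>r. q1 r $ a *\<^sub>R q3 r))"
      by (rule delta_balance23) (simp_all add: vf_S2_on_S2 tpf poly)
    also have "\<dots> \<cong> fsum UNIV (\<lambda>b.
        delta (on_S2 (?X a), on_S2 (\<lambda>r. q2 r $ b *\<^sub>R ?X b r), on_S2 (\<lambda>r. q1 r $ a *\<^sub>R q3 r)))"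
      by (subst on_S2_frame_expansion[OF q2], intro linear_mod_rels_on_S2_sum linear_mod_rels_slot2)
         (simp_all add: vf_S2_on_S2 tangent_polynomial_field_component_scaleR tpf)
    also have "\<dots> \<cong> fsum UNIV (\<lambda>b.
        delta (on_S2 (?X a), on_S2 (?X b), on_S2 (\<lambda>r. q2 r $ b *\<^sub>R q1 r $ a *\<^sub>R q3 r)))"
      by (intro rel_equiv_fsum delta_balance23)
         (simp_all add: vf_S2_on_S2 tangent_polynomial_field_component_scaleR tpf poly)
    finally show "delta (on_S2 (\<lambda>r. q1 r $ a *\<^sub>R ?X a r), on_S2 q2, on_S2 q3)
        \<cong> fsum UNIV (\<lambda>b.
            delta (on_S2 (?X a), on_S2 (?X b), on_S2 (\<lambda>r. (q1 r $ a * q2 r $ b) *\<^sub>R q3 r)))"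
      by (simp add: mult.commute)
  qed
  finally show ?thesis
    by (simp add: frame_tensor_def Xf_eq_on_S2)
qed

lemma frame_tensor_diff:
  assumes "\<And>a b. tangent_polynomial_field (W a b)" "\<And>a b. tangent_polynomial_field (W' a b)"
  shows "frame_tensor (\<lambda>a b r. W a b r - W' a b r) \<cong> fsub (frame_tensor W) (frame_tensor W')"
  unfolding frame_tensor_def fsub_fsum
  by (intro rel_equiv_fsum finite linear_mod_rels_on_S2_diff linear_mod_rels_slot3 vf_S2_Xf assms)

lemma frame_tensor_sum:
  assumes "finite I" "\<And>i a b. i \<in> I \<Longrightarrow> tangent_polynomial_field (W i a b)"
  shows "frame_tensor (\<lambda>a b r. \<Sum>i\<in>I. W i a b r) \<cong> fsum I (\<lambda>i. frame_tensor (W i))"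
  unfolding frame_tensor_def fsum_swap[of I]
  by (intro rel_equiv_fsum finite linear_mod_rels_on_S2_sum linear_mod_rels_slot3 vf_S2_Xf assms)

lemma frame_tensor_vanishing:
  assumes "\<And>a b r. r \<in> S2 \<Longrightarrow> W a b r = 0"
  shows "frame_tensor W \<in> rel_span"
proof -
  have "on_S2 (W a b) = (\<lambda>r. 0)" for a b
    using assms by (auto simp: on_S2_def)
  then show ?thesis
    unfolding frame_tensor_def
    by (simp add: rel_span_fsum linear_mod_rels_zero[OF linear_mod_rels_slot3[OF vf_S2_Xf vf_S2_Xf]])
qed

lemma cross_tensor_identity:
  assumes "r \<bullet> r = 1"
  shows "(\<Sum>i\<in>UNIV. \<Sum>j\<in>UNIV.
      (cross3 (cross3 (e i) (e j)) r $ a * cross3 (e j) r $ b) *\<^sub>R cross3 (e i) r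
    - (tangent_proj (e j) r $ a * tangent_proj (cross3 (e i) (e j)) r $ b) *\<^sub>R cross3 (e i) r) = 0"
proof -
  have "r$1 * r$1 + r$2 * r$2 + r$3 * r$3 = 1"
    using assms by (simp add: inner_vec_def sum_3)
  then have h: "r$k * (r$1 * r$1) + r$k * (r$2 * r$2) + r$k * (r$3 * r$3) = r$k" for k
    by (metis distrib_left mult.right_neutral)
  have "a = 1 \<or> a = 2 \<or> a = 3" "b = 1 \<or> b = 2 \<or> b = 3"
    by (rule exhaust_3)+
  then show ?thesis
    apply (elim disjE)
    apply (simp_all add: vec_eq_iff forall_3 sum_3 cross3_def tangent_proj_def inner_vec_def axis_def
        algebra_simps)
    apply safe
    apply (use h[of 1] h[of 2] h[of 3] in \<open>simp add: algebra_simps\<close>)+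
    done
qed

theorem lemma4p5p1:
  shows "psi \<in> rel_span"
proof -
  define U where "U i j a b r =
    (cross3 (cross3 (e i) (e j)) r $ a * cross3 (e j) r $ b) *\<^sub>R cross3 (e i) r" for i j a b r
  define V where "V i j a b r =
    (tangent_proj (e j) r $ a * tangent_proj (cross3 (e i) (e j)) r $ b) *\<^sub>R cross3 (e i) r" for i j a b r
  note tpf = tangent_polynomial_field_cross3 tangent_polynomial_field_tangent_proj
  have UV: "tangent_polynomial_field (U i j a b)" "tangent_polynomial_field (V i j a b)" for i j a b
    unfolding U_def V_def by (intro tangent_polynomial_field_coefficient_scaleR tpf)+
  have psi_eq: "psi = fsum UNIV (\<lambda>i. fsum UNIV (\<lambda>j.
      fsub (delta (on_S2 (cross3 (cross3 (e i) (e j))), on_S2 (cross3 (e j)), on_S2 (cross3 (e i))))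
           (delta (on_S2 (tangent_proj (e j)), on_S2 (tangent_proj (cross3 (e i) (e j))),
                   on_S2 (cross3 (e i))))))"
    unfolding psi_def fsum_def fsub_def Xf_eq_on_S2 Yf_eq_on_S2 ..
  have "psi \<cong> fsum UNIV (\<lambda>i. fsum UNIV (\<lambda>j. fsub (frame_tensor (U i j)) (frame_tensor (V i j))))"
    unfolding psi_eq U_def V_def by (intro rel_equiv_fsum rel_equiv_fsub delta_frame_expansion finite tpf)
  also have "\<dots> \<cong> fsum UNIV (\<lambda>i. fsum UNIV (\<lambda>j. frame_tensor (\<lambda>a b r. U i j a b r - V i j a b r)))"
    by (intro rel_equiv_fsum finite rel_equiv_sym[OF frame_tensor_diff] UV)
  also have "\<dots> \<cong> fsum UNIV (\<lambda>i. frame_tensor (\<lambda>a b r. \<Sum>j\<in>UNIV. U i j a b r - V i j a b r))"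
    by (intro rel_equiv_fsum finite rel_equiv_sym[OF frame_tensor_sum] tangent_polynomial_field_diff UV)
  also have "\<dots> \<cong> frame_tensor (\<lambda>a b r. \<Sum>i\<in>UNIV. \<Sum>j\<in>UNIV. U i j a b r - V i j a b r)"
    by (intro rel_equiv_sym[OF frame_tensor_sum] finite
        tangent_polynomial_field_sum tangent_polynomial_field_diff UV)
  finally show ?thesis
    by (rule rel_span_rel_equiv, intro frame_tensor_vanishing)
       (simp add: U_def V_def sum_subtractf[symmetric] cross_tensor_identity S2_def)
qed

end
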